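(* Let $\mathcal{F}$ be a semi-metric space with semi-metric $d$, $x\in\mathcal{F}$, and $X_1,X_2,\ldots$ i.i.d. $\mathcal{F}$-valued random elements. Let $\varphi(h)=P(X_1\in B(x,h))$ where $B(x,h)=\{x':d(x',x)\le h\}$, and $\varphi^{-1}(t)=\inf\{h:\varphi(h)\ge t\}$. Let $k=k_n$ satisfy $k/n\to0$ and $k/\log n\to\infty$, and let $H=\inf\{h\in\mathbb{R}:\sum_{i=1}^nI\{X_i\in B(x,h)\}\ge k\}$. Then $P\big(H>\varphi^{-1}(2k/n)\ \text{infinitely often}\big)=0$, i.e. almost surely $H\le\varphi^{-1}(2k/n)$ for all $n$ large enough. *)

theory Defs
  imports "HOL-Probability.Probability"
begin

definition semimetric_on :: "'a set \<Rightarrow> ('a \<Rightarrow> 'a \<Rightarrow> real) \<Rightarrow> bool" where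
  "semimetric_on S d \<longleftrightarrow> (\<forall>y\<in>S. \<forall>z\<in>S. d y z \<ge> 0 \<and> d y z = d z y) \<and> (\<forall>y\<in>S. d y y = 0)"

definition sball :: "'a set \<Rightarrow> ('a \<Rightarrow> 'a \<Rightarrow> real) \<Rightarrow> 'a \<Rightarrow> real \<Rightarrow> 'a set" where
  "sball S d x h = {x' \<in> S. d x' x \<le> h}"

definition small_ball_prob :: "'w measure \<Rightarrow> ('w \<Rightarrow> 'a) \<Rightarrow> 'a set \<Rightarrow> ('a \<Rightarrow> 'a \<Rightarrow> real) \<Rightarrow> 'a \<Rightarrow> real \<Rightarrow> real" where
  "small_ball_prob M Y S d x h = measure M {\<omega> \<in> space M. Y \<omega> \<in> sball S d x h}"

definition gen_inv :: "(real \<Rightarrow> real) \<Rightarrow> real \<Rightarrow> real" where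
  "gen_inv \<phi> t = Inf {h. \<phi> h \<ge> t}"

definition knn_radius :: "'a set \<Rightarrow> ('a \<Rightarrow> 'a \<Rightarrow> real) \<Rightarrow> 'a \<Rightarrow> (nat \<Rightarrow> 'a) \<Rightarrow> nat \<Rightarrow> nat \<Rightarrow> real" where
  "knn_radius S d x xs n k =
     Inf {h. (\<Sum>i\<in>{1..n}. indicator (sball S d x h) (xs i)) \<ge> (real k)}"

end

theory Submission
  imports Defs
begin

text \<open>The small ball probability \<open>\<phi>\<close> is the distribution function of \<open>d(X 1, x)\<close>, so it is
  right-continuous and the generalized inverse is attained: each \<open>X i\<close> lies in the ball of
  radius \<open>r n = \<phi>\<inverse>(2k/n)\<close> with probability at least \<open>2k/n\<close>. A Chernoff bound then shows that
  fewer than \<open>k\<close> of \<open>X 1, \<dots>, X n\<close> hit this ball with probability at most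
  \<open>2^k exp (-k) = exp (-(1 - ln 2) k)\<close>, which is at most \<open>1 / n^2\<close> once \<open>k / ln n\<close> is large.
  By Borel--Cantelli, almost surely the ball eventually contains \<open>k\<close> sample points,
  i.e. \<open>H \<le> r n\<close>.\<close>

lemma sball_empty_if_neg:
  assumes "semimetric_on S d" "x \<in> S" "h < 0"
  shows "sball S d x h = {}"
  using assms unfolding semimetric_on_def sball_def by force

lemma knn_radius_le:
  assumes "semimetric_on S d" "x \<in> S" "k \<ge> 1"
    and "real k \<le> (\<Sum>i\<in>{1..n}. indicator (sball S d x h) (xs i))"
  shows "knn_radius S d x xs n k \<le> h"
  unfolding knn_radius_def
proof (rule cInf_lower)
  show "bdd_below {h. real k \<le> (\<Sum>i\<in>{1..n}. indicator (sball S d x h) (xs i) :: real)}"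
  proof (rule bdd_belowI[of _ 0])
    fix h' assume "h' \<in> {h. real k \<le> (\<Sum>i\<in>{1..n}. indicator (sball S d x h) (xs i) :: real)}"
    then show "0 \<le> h'"
      using sball_empty_if_neg[OF assms(1,2), of h'] \<open>k \<ge> 1\<close> by (cases "h' < 0") auto
  qed
qed (use assms(4) in simp)

lemma small_ball_prob_eq_distr:
  assumes "X \<in> measurable M N" "sball (space N) d x h \<in> sets N"
  shows "small_ball_prob M X (space N) d x h = measure (distr M N X) (sball (space N) d x h)"
  using assms by (auto simp: small_ball_prob_def measure_distr vimage_def Int_def conj_commute)

lemma (in prob_space) small_ball_prob_eq_cdf:
  assumes "X \<in> measurable M N" and "\<And>h. sball (space N) d x h \<in> sets N"
  shows "(\<lambda>\<omega>. d (X \<omega>) x) \<in> borel_measurable M"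
    and "small_ball_prob M X (space N) d x = cdf (distr M borel (\<lambda>\<omega>. d (X \<omega>) x))"
proof -
  have sublevel_eq: "{\<omega>\<in>space M. d (X \<omega>) x \<le> h} = {\<omega>\<in>space M. X \<omega> \<in> sball (space N) d x h}" for h
    using measurable_space[OF assms(1)] by (auto simp: sball_def)
  have "{\<omega>\<in>space M. X \<omega> \<in> sball (space N) d x h} \<in> sets M" for h
    using assms by measurable
  then show meas: "(\<lambda>\<omega>. d (X \<omega>) x) \<in> borel_measurable M"
    unfolding borel_measurable_iff_le sublevel_eq by simp
  show "small_ball_prob M X (space N) d x = cdf (distr M borel (\<lambda>\<omega>. d (X \<omega>) x))"
    using meas by (auto simp: fun_eq_iff cdf_def measure_distr small_ball_prob_def vimage_def Int_def
        conj_commute sublevel_eq[symmetric])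
qed

lemma (in real_distribution) cdf_gen_inv_ge:
  assumes "0 < t" "t < 1"
  shows "t \<le> cdf M (gen_inv (cdf M) t)"
proof -
  define A where "A = {h. t \<le> cdf M h}"
  have "eventually (\<lambda>h. t < cdf M h) at_top"
    using order_tendstoD(1)[OF cdf_lim_at_top_prob \<open>t < 1\<close>] .
  then obtain a where "a \<in> A"
    unfolding A_def by (metis eventually_at_top_linorder less_imp_le mem_Collect_eq order_refl)
  have "eventually (\<lambda>h. cdf M h < t) at_bot"
    using order_tendstoD(2)[OF cdf_lim_at_bot \<open>0 < t\<close>] .
  then obtain b where b: "\<And>h. h \<le> b \<Longrightarrow> cdf M h < t" by (auto simp: eventually_at_bot_linorder)
  have "bdd_below A"
    by (rule bdd_belowI[of _ b]) (metis A_def b mem_Collect_eq not_le order.strict_iff_not)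
  have "eventually (\<lambda>h. t \<le> cdf M h) (at_right (Inf A))"
  proof (rule eventually_at_rightI)
    fix h assume "h \<in> {Inf A<..<a + 1}"
    then obtain a' where "a' \<in> A" "a' < h"
      using cInf_less_iff[OF _ \<open>bdd_below A\<close>] \<open>a \<in> A\<close> by auto
    then show "t \<le> cdf M h" using cdf_nondecreasing[of a' h] unfolding A_def by auto
  next
    show "Inf A < a + 1" using cInf_lower[OF \<open>a \<in> A\<close> \<open>bdd_below A\<close>] by simp
  qed
  then have "t \<le> cdf M (Inf A)"
    using cdf_is_right_cont[of "Inf A"] unfolding continuous_within
    by (intro tendsto_lowerbound) auto
  then show ?thesis unfolding gen_inv_def A_def .
qed

lemma (in prob_space)
  fixes X :: "nat \<Rightarrow> 'a \<Rightarrow> 'b" and n :: nat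
  assumes meas: "\<And>i. i \<ge> 1 \<Longrightarrow> X i \<in> measurable M N"
    and indep: "indep_vars (\<lambda>_. N) X {1..}" and B: "B \<in> sets N"
    and p: "\<And>i. i \<ge> 1 \<Longrightarrow> prob {\<omega>\<in>space M. X i \<omega> \<in> B} = p"
  defines "W \<equiv> \<lambda>\<omega>. \<Prod>i\<in>{1..n}. if X i \<omega> \<in> B then 1 / 2 else 1 :: real"
  shows integrable_halving_prod: "integrable M W"
    and expectation_halving_prod_le: "expectation W \<le> exp (- real n * p / 2)"
proof -
  define f where "f y = (if y \<in> B then 1 / 2 else 1 :: real)" for y
  have W_f: "W = (\<lambda>\<omega>. \<Prod>i\<in>{1..n}. f (X i \<omega>))"
    unfolding W_def f_def ..
  have f_meas: "f \<in> borel_measurable N"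
    unfolding f_def by (intro measurable_If_set) (auto simp: B)
  have indep_f: "indep_vars (\<lambda>_. borel) (\<lambda>i \<omega>. f (X i \<omega>)) {1..n}"
    by (rule indep_vars_subset[OF indep_vars_compose2[OF indep, of "\<lambda>_. f"]]) (auto simp: f_meas)
  have int_f: "integrable M (\<lambda>\<omega>. f (X i \<omega>))" if "i \<ge> 1" for i
    using measurable_compose[OF meas[OF that] f_meas]
    by (intro integrable_const_bound[where B=1]) (auto simp: f_def)
  have E_f: "expectation (\<lambda>\<omega>. f (X i \<omega>)) = 1 - p / 2" if "i \<ge> 1" for i
  proof -
    have ev: "{\<omega>\<in>space M. X i \<omega> \<in> B} \<in> events"
      using meas[OF that] B by measurable
    have "expectation (\<lambda>\<omega>. f (X i \<omega>))
        = expectation (\<lambda>\<omega>. 1 - indicator {\<omega>\<in>space M. X i \<omega> \<in> B} \<omega> / 2)"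
      by (intro Bochner_Integration.integral_cong) (auto simp: f_def indicator_def)
    also have "\<dots> = 1 - prob {\<omega>\<in>space M. X i \<omega> \<in> B} / 2"
      using ev emeasure_finite[of "{\<omega>\<in>space M. X i \<omega> \<in> B}"]
      by (subst Bochner_Integration.integral_diff)
         (auto simp: prob_space emeasure_eq_measure intro!: integrable_real_indicator integrable_divide)
    finally show ?thesis using p[OF that] by simp
  qed
  show "integrable M W"
    unfolding W_f using indep_vars_integrable[OF _ indep_f] int_f by simp
  have "expectation W = (1 - p / 2) ^ n"
    unfolding W_f using indep_vars_lebesgue_integral[OF _ indep_f] int_f E_f by simp
  also have "\<dots> \<le> exp (- p / 2) ^ n"
    using p[of 1] prob_le_1[of "{\<omega>\<in>space M. X 1 \<omega> \<in> B}"] exp_ge_add_one_self[of "- p / 2"]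
    by (intro power_mono) auto
  also have "\<dots> = exp (- real n * p / 2)"
    by (simp add: exp_of_nat_mult[symmetric])
  finally show "expectation W \<le> exp (- real n * p / 2)" .
qed

text \<open>Chernoff bound: Markov's inequality applied to \<open>2 ^ (- number of hits)\<close>.\<close>

lemma (in prob_space) prob_hits_less_le:
  fixes X :: "nat \<Rightarrow> 'a \<Rightarrow> 'b"
  assumes meas: "\<And>i. i \<ge> 1 \<Longrightarrow> X i \<in> measurable M N"
    and indep: "indep_vars (\<lambda>_. N) X {1..}" and B: "B \<in> sets N"
    and p: "\<And>i. i \<ge> 1 \<Longrightarrow> prob {\<omega>\<in>space M. X i \<omega> \<in> B} = p"
  shows "prob {\<omega>\<in>space M. (\<Sum>i\<in>{1..n}. indicator B (X i \<omega>)) < real k}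
           \<le> 2 ^ k * exp (- real n * p / 2)"
proof -
  define W where "W \<omega> = (\<Prod>i\<in>{1..n}. if X i \<omega> \<in> B then 1 / 2 else 1 :: real)" for \<omega>
  note int_W = integrable_halving_prod[OF meas indep B p, of n, folded W_def]
  have "W \<omega> = (1 / 2) ^ card {i\<in>{1..n}. X i \<omega> \<in> B}"
    and "(\<Sum>i\<in>{1..n}. indicator B (X i \<omega>)) = real (card {i\<in>{1..n}. X i \<omega> \<in> B})" for \<omega>
    unfolding W_def indicator_def
    using prod.inter_filter[of "{1..n}" "\<lambda>_. 1 / 2 :: real" "\<lambda>i. X i \<omega> \<in> B"]
      sum.inter_filter[of "{1..n}" "\<lambda>_. 1 :: real" "\<lambda>i. X i \<omega> \<in> B"]
    by (simp_all add: Int_def)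
  then have "{\<omega>\<in>space M. (\<Sum>i\<in>{1..n}. indicator B (X i \<omega>)) < real k}
      \<subseteq> {\<omega>\<in>space M. (1 / 2) ^ k \<le> W \<omega>}"
    by (auto intro!: power_decreasing)
  then have "prob {\<omega>\<in>space M. (\<Sum>i\<in>{1..n}. indicator B (X i \<omega>)) < real k}
      \<le> prob {\<omega>\<in>space M. (1 / 2) ^ k \<le> W \<omega>}"
    using int_W by (intro finite_measure_mono) auto
  also have "\<dots> \<le> expectation W / (1 / 2) ^ k"
    by (rule integral_Markov_inequality_measure[OF int_W, where A="space M"])
       (auto simp: W_def intro!: prod_nonneg)
  also have "\<dots> \<le> 2 ^ k * exp (- real n * p / 2)"
    using expectation_halving_prod_le[OF meas indep B p, of n, folded W_def]
    by (simp add: power_one_over)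
  finally show ?thesis .
qed

lemma sets_count_hits_less:
  assumes "\<And>i. i \<in> {1..n} \<Longrightarrow> X i \<in> measurable M N" and "B \<in> sets N"
  shows "{\<omega>\<in>space M. (\<Sum>i\<in>{1..n}. indicator B (X i \<omega>)) < (c :: real)} \<in> sets M"
proof -
  have "(\<lambda>\<omega>. indicator B (X i \<omega>) :: real) \<in> borel_measurable M" if "i \<in> {1..n}" for i
    using measurable_compose[OF assms(1)[OF that] borel_measurable_indicator[OF assms(2)]] .
  then have "(\<lambda>\<omega>. \<Sum>i\<in>{1..n}. indicator B (X i \<omega>) :: real) \<in> borel_measurable M"
    by (rule borel_measurable_sum)
  then show ?thesis
    by (rule borel_measurable_less[OF _ borel_measurable_const])
qed

lemma (in prob_space) prob_hits_small_ball_less_le: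
  assumes balls_meas: "\<And>h. sball (space N) d x h \<in> sets N"
    and meas: "\<And>i. i \<ge> 1 \<Longrightarrow> X i \<in> measurable M N"
    and indep: "indep_vars (\<lambda>_. N) X {1..}"
    and ident: "\<And>i. i \<ge> 1 \<Longrightarrow> distr M N (X i) = distr M N (X 1)"
    and "0 < t" "t < 1"
  defines "r \<equiv> gen_inv (small_ball_prob M (X 1) (space N) d x) t"
  shows "prob {\<omega>\<in>space M. (\<Sum>i\<in>{1..n}. indicator (sball (space N) d x r) (X i \<omega>)) < real k}
           \<le> 2 ^ k * exp (- real n * t / 2)"
proof -
  define F where "F = distr M borel (\<lambda>\<omega>. d (X 1 \<omega>) x)"
  have X1: "X 1 \<in> measurable M N" using meas by simp
  have F: "real_distribution F"
    unfolding F_def using small_ball_prob_eq_cdf(1)[OF X1 balls_meas] by simp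
  have \<phi>: "small_ball_prob M (X 1) (space N) d x = cdf F"
    unfolding F_def by (rule small_ball_prob_eq_cdf(2)[OF X1 balls_meas])
  have hits: "prob {\<omega>\<in>space M. X i \<omega> \<in> sball (space N) d x h} = cdf F h" if "i \<ge> 1" for i h
    using small_ball_prob_eq_distr[OF meas[OF that] balls_meas]
      small_ball_prob_eq_distr[OF X1 balls_meas] ident[OF that] fun_cong[OF \<phi>, of h]
    by (simp add: small_ball_prob_def)
  have "t \<le> cdf F r"
    unfolding r_def \<phi> by (rule real_distribution.cdf_gen_inv_ge[OF F \<open>0 < t\<close> \<open>t < 1\<close>])
  have "prob {\<omega>\<in>space M. (\<Sum>i\<in>{1..n}. indicator (sball (space N) d x r) (X i \<omega>)) < real k}
      \<le> 2 ^ k * exp (- real n * cdf F r / 2)"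
    by (rule prob_hits_less_le[OF meas indep balls_meas hits])
  also have "\<dots> \<le> 2 ^ k * exp (- real n * t / 2)"
    using \<open>t \<le> cdf F r\<close> by (intro mult_left_mono) (simp_all add: mult_left_mono)
  finally show ?thesis .
qed

lemma eventually_ge_1_if_ratio_ln_at_top:
  fixes k :: "nat \<Rightarrow> nat"
  assumes "filterlim (\<lambda>n. real (k n) / ln (real n)) at_top sequentially"
  shows "eventually (\<lambda>n. k n \<ge> 1) sequentially"
proof -
  have "eventually (\<lambda>n. 1 \<le> real (k n) / ln (real n) \<and> n \<ge> 2) sequentially"
    using assms eventually_ge_at_top[of 2] unfolding filterlim_at_top by (auto intro: eventually_conj)
  then show ?thesis
  proof eventually_elim
    case (elim n)
    then have "0 < ln (real n)" by simp
    moreover from this elim have "ln (real n) \<le> real (k n)" by (auto simp: pos_le_divide_eq)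
    ultimately have "0 < real (k n)" by linarith
    then show ?case by simp
  qed
qed

lemma eventually_pow2_exp_le_inverse_square:
  fixes k :: "nat \<Rightarrow> nat"
  assumes "filterlim (\<lambda>n. real (k n) / ln (real n)) at_top sequentially"
  shows "eventually (\<lambda>n. 2 ^ k n * exp (- real (k n)) \<le> inverse (real n ^ 2)) sequentially"
proof -
  define c where "c = 2 / (1 - ln (2 :: real))"
  have "eventually (\<lambda>n. c \<le> real (k n) / ln (real n) \<and> n \<ge> 2) sequentially"
    using assms eventually_ge_at_top[of 2] unfolding filterlim_at_top by (auto intro: eventually_conj)
  then show ?thesis
  proof eventually_elim
    case (elim n)
    moreover have "ln (real n) > 0" using elim by simp
    ultimately have "c * ln (real n) \<le> real (k n)" by (simp add: field_simps)
    then have "2 * ln (real n) \<le> (1 - ln 2) * real (k n)"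
      using ln_2_less_1 unfolding c_def by (simp add: field_simps)
    moreover have "(2 :: real) ^ k n = exp (real (k n) * ln 2)"
      by (simp add: exp_of_nat_mult)
    ultimately have "2 ^ k n * exp (- real (k n)) \<le> exp (- (2 * ln (real n)))"
      by (simp add: exp_add[symmetric] algebra_simps)
    also have "\<dots> = inverse (exp (2 * ln (real n)))"
      by (simp add: exp_minus)
    also have "\<dots> = inverse (real n ^ 2)"
      using elim exp_of_nat_mult[of 2 "ln (real n)"] by simp
    finally show ?case .
  qed
qed

lemma (in prob_space) AE_eventually_notin_if_prob_le_inverse_square:
  assumes "\<And>n. A n \<in> events"
    and "eventually (\<lambda>n. prob (A n) \<le> inverse (real n ^ 2)) sequentially"
  shows "AE \<omega> in M. eventually (\<lambda>n. \<omega> \<notin> A n) sequentially"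
proof -
  have "eventually (\<lambda>n. norm (prob (A n)) \<le> inverse (real n ^ 2)) sequentially"
    using assms(2) by (rule eventually_mono) simp
  then have "summable (\<lambda>n. prob (A n))"
    by (rule summable_comparison_test_ev) (rule inverse_power_summable, simp)
  then have "AE \<omega> in M. eventually (\<lambda>n. \<omega> \<in> space M - A n) sequentially"
    using assms(1) by (intro borel_cantelli_AE1) (simp_all add: emeasure_eq_measure)
  then show ?thesis
    by (rule eventually_mono) (auto elim: eventually_mono)
qed

theorem proposition1:
  fixes M :: "'w measure" and N :: "'a measure"
    and d :: "'a \<Rightarrow> 'a \<Rightarrow> real" and x :: 'a
    and X :: "nat \<Rightarrow> 'w \<Rightarrow> 'a" and k :: "nat \<Rightarrow> nat"
  assumes "prob_space M"
    and "semimetric_on (space N) d"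
    and "x \<in> space N"
    and balls_meas: "\<And>h. sball (space N) d x h \<in> sets N"
    and meas: "\<And>i. i \<ge> 1 \<Longrightarrow> X i \<in> measurable M N"
    and indep: "prob_space.indep_vars M (\<lambda>_. N) X {1..}"
    and ident: "\<And>i. i \<ge> 1 \<Longrightarrow> distr M N (X i) = distr M N (X 1)"
    and k_small: "(\<lambda>n. real (k n) / real n) \<longlonglongrightarrow> 0"
    and k_large: "filterlim (\<lambda>n. real (k n) / ln (real n)) at_top sequentially"
  shows "AE \<omega> in M. eventually (\<lambda>n.
           knn_radius (space N) d x (\<lambda>i. X i \<omega>) n (k n)
             \<le> gen_inv (small_ball_prob M (X 1) (space N) d x) (2 * real (k n) / real n))
         sequentially"
proof -
  interpret prob_space M by fact
  define r where "r n = gen_inv (small_ball_prob M (X 1) (space N) d x) (2 * real (k n) / real n)"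
    for n
  define A where "A n = {\<omega>\<in>space M.
      (\<Sum>i\<in>{1..n}. indicator (sball (space N) d x (r n)) (X i \<omega>)) < real (k n)}" for n
  have A_events: "A n \<in> events" for n
    unfolding A_def using meas balls_meas by (intro sets_count_hits_less) auto
  txt \<open>\<open>k/n \<rightarrow> 0\<close> only serves to keep \<open>2k/n < 1\<close>, where the generalized inverse is attained.\<close>
  have "eventually (\<lambda>n. real (k n) / real n < 1 / 2) sequentially"
    by (rule order_tendstoD(2)[OF k_small]) simp
  moreover note eventually_ge_1_if_ratio_ln_at_top[OF k_large] eventually_gt_at_top[of 0]
    eventually_pow2_exp_le_inverse_square[OF k_large]
  ultimately have "eventually (\<lambda>n. prob (A n) \<le> inverse (real n ^ 2)) sequentially"
  proof eventually_elim
    case (elim n)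
    then have "0 < 2 * real (k n) / real n" "2 * real (k n) / real n < 1"
      by (simp_all add: field_simps)
    from prob_hits_small_ball_less_le[OF balls_meas meas indep ident this, where n=n and k="k n"]
    have "prob (A n) \<le> 2 ^ k n * exp (- real (k n))"
      unfolding A_def r_def using elim by simp
    with elim show ?case by linarith
  qed
  with A_events have "AE \<omega> in M. eventually (\<lambda>n. \<omega> \<notin> A n) sequentially"
    by (rule AE_eventually_notin_if_prob_le_inverse_square)
  with AE_space show ?thesis
  proof eventually_elim
    case (elim \<omega>)
    from elim(2) eventually_ge_1_if_ratio_ln_at_top[OF k_large] show ?case
      by eventually_elim (use elim(1) in \<open>auto simp: A_def r_def not_less
          intro: knn_radius_le[OF \<open>semimetric_on (space N) d\<close> \<open>x \<in> space N\<close>]\<close>)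
  qed
qed

end
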